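(* Let $Y\in\mathcal{P}^\infty(\Omega)$ and $\overline Y(\xi)=\frac1T\int_0^TY(s,\xi)\,ds$. Consider vector fields on $\mathbb{R}^{N+1}$ (coordinates $(t,\xi)$) given by $\widetilde Y^{(0)}_0=[1,0_{\mathbb{R}^N}]^T$, $\widetilde Y^{(0)}_1=[0,Y]^T$, $\widetilde Y^{(0)}_k=0$ for $k\ge2$, and a generator sequence $\widetilde G_0=[1,G_0]^T$, $\widetilde G_n=[0,G_n]^T$ ($n\ge1$), with $G_n$ smooth. Define $\widetilde Y^{(i)}_n$ for $i\ge1$ by the recursion $$\widetilde Y^{(i+1)}_n=\widetilde Y^{(i)}_{n+1}+\sum_{k=0}^nC_n^k\,L_{\widetilde G_{n-k}}\widetilde Y^{(i)}_k,\qquad (i,n)\in\mathbb{Z}_+^2,$$ and assume Lie's equations hold: $\widetilde Y^{(1)}_0=[0,\overline Y]^T$ and $\widetilde Y^{(m)}_0=0$ for all integers $m\ge2$. Define $M(j+k,j)=\widetilde Y^{(j)}_k$ for $k\ge0$, $j\ge1$ (and $M(i,j)=0$ for $i<j$). Then for every integer $j\ge2$ and every $l\in\{0,\dots,j-2\}$, $M(j,j-l)=0$, i.e. $\widetilde Y^{(j-l)}_l=0$.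
   Context: $\Omega\subset\mathbb{R}^N$ open, $T>0$; $\mathcal{P}^\infty(\Omega)$ denotes maps $\mathbb{R}^+\times\Omega\to\Omega$, $T$-periodic in $t$, smooth in $x$. $C_n^k$ is the binomial coefficient. For vector fields $H,A$ on $\mathbb{R}^{N+1}$, the Lie derivative is $L_HA=DA\cdot H-DH\cdot A$, $D$ the Jacobian in all $N+1$ variables $(t,\xi)$. *)

theory Defs
  imports "HOL-Analysis.Analysis"
begin

fun Ck_on :: "nat \<Rightarrow> 'a::real_normed_vector set \<Rightarrow> ('a \<Rightarrow> 'b::real_normed_vector) \<Rightarrow> bool" where
  "Ck_on 0 S f = continuous_on S f"
| "Ck_on (Suc k) S f = ((\<forall>x\<in>S. f differentiable (at x)) \<and>
      (\<forall>v. Ck_on k S (\<lambda>x. frechet_derivative f (at x) v)))"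

definition smooth_on :: "'a::real_normed_vector set \<Rightarrow> ('a \<Rightarrow> 'b::real_normed_vector) \<Rightarrow> bool" where
  "smooth_on S f = (\<forall>k. Ck_on k S f)"

definition lie_deriv :: "('a::real_normed_vector \<Rightarrow> 'a) \<Rightarrow> ('a \<Rightarrow> 'a) \<Rightarrow> 'a \<Rightarrow> 'a" where
  "lie_deriv H A x = frechet_derivative A (at x) (H x) - frechet_derivative H (at x) (A x)"

definition gen_field :: "(nat \<Rightarrow> real \<times> 'v \<Rightarrow> 'v::real_normed_vector) \<Rightarrow> nat \<Rightarrow> real \<times> 'v \<Rightarrow> real \<times> 'v" where
  "gen_field G n = (\<lambda>x. (if n = 0 then 1 else 0, G n x))"

definition avg :: "real \<Rightarrow> (real \<Rightarrow> 'v \<Rightarrow> 'v::euclidean_space) \<Rightarrow> 'v \<Rightarrow> 'v" where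
  "avg T Y \<xi> = (1 / T) *\<^sub>R integral {0..T} (\<lambda>s. Y s \<xi>)"

end

theory Submission
  imports Defs
begin

text \<open>Only Lie's equations Y~^(m)_0 = 0 for m \<ge> 2 and the recursion are needed.
  By induction on k, Y~^(m)_k vanishes on UNIV \<times> \<Omega> for every m \<ge> 2: the recursion at
  (m, k - 1) writes Y~^(m)_k as Y~^(m+1)_(k-1) minus Lie derivatives of the fields Y~^(m)_k'
  with k' < k, and a Lie derivative of a field vanishing on an open set vanishes there.\<close>

lemma frechet_derivative_vanishing_on_open:
  assumes "open S" "\<forall>y\<in>S. A y = 0" "x \<in> S"
  shows "frechet_derivative A (at x) = (\<lambda>_. 0)"
proof -
  have "(A has_derivative (\<lambda>_. 0)) (at x)"
    by (rule has_derivative_transform_within_open[OF has_derivative_const assms(1,3)])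
      (use assms(2) in auto)
  then show ?thesis
    using frechet_derivative_at by metis
qed

lemma lie_deriv_vanishing_on_open:
  assumes "open S" "\<forall>y\<in>S. A y = 0" "x \<in> S" "H differentiable (at x)"
  shows "lie_deriv H A x = 0"
proof -
  have "linear (frechet_derivative H (at x))"
    using assms(4) frechet_derivative_works has_derivative_linear by blast
  then have "frechet_derivative H (at x) 0 = 0"
    by (rule linear_0)
  then show ?thesis
    using assms frechet_derivative_vanishing_on_open[OF assms(1-3)]
    unfolding lie_deriv_def by simp
qed

lemma gen_field_differentiable:
  assumes "G n differentiable (at x)"
  shows "gen_field G n differentiable (at x)"
proof -
  obtain g where "(G n has_derivative g) (at x)"
    using assms differentiable_def by blast
  then have "(gen_field G n has_derivative (\<lambda>h. (0, g h))) (at x)"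
    unfolding gen_field_def by (intro has_derivative_Pair has_derivative_const)
  then show ?thesis
    unfolding differentiable_def by blast
qed

lemma smooth_on_differentiable:
  assumes "smooth_on S f" "x \<in> S"
  shows "f differentiable (at x)"
  using assms unfolding smooth_on_def by (metis Ck_on.simps(2))

lemma lie_recursion_higher_fields_vanish:
  fixes Yt :: "nat \<Rightarrow> nat \<Rightarrow> real \<times> 'v::real_normed_vector \<Rightarrow> real \<times> 'v"
  assumes "open S"
    and G_diff: "\<And>n x. x \<in> S \<Longrightarrow> G n differentiable (at x)"
    and recur: "\<And>i n x. x \<in> S \<Longrightarrow> Yt (Suc i) n x =
       Yt i (Suc n) x + (\<Sum>k\<le>n. real (n choose k) *\<^sub>R lie_deriv (gen_field G (n - k)) (Yt i k) x)"
    and lie_higher: "\<And>m x. m \<ge> 2 \<Longrightarrow> x \<in> S \<Longrightarrow> Yt m 0 x = 0"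
  shows "m \<ge> 2 \<Longrightarrow> x \<in> S \<Longrightarrow> Yt m k x = 0"
proof (induction k arbitrary: m x rule: less_induct)
  case (less k)
  show ?case
  proof (cases k)
    case 0
    then show ?thesis using less.prems lie_higher by simp
  next
    case (Suc n)
    have lie_terms: "lie_deriv (gen_field G (n - k')) (Yt m k') x = 0" if "k' \<le> n" for k'
      using \<open>open S\<close> less.IH[of k' m] less.prems \<open>k = Suc n\<close> that
      by (intro lie_deriv_vanishing_on_open gen_field_differentiable G_diff) auto
    have "Yt (Suc m) n x = 0"
      using less.IH less.prems \<open>k = Suc n\<close> by simp
    with recur[OF less.prems(2), of m n] lie_terms \<open>k = Suc n\<close> show ?thesis
      by simp
  qed
qed

theorem proposition2p5:
  fixes \<Omega> :: "(real^'n) set" and T :: real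
    and Y :: "real \<Rightarrow> real^'n \<Rightarrow> real^'n"
    and G :: "nat \<Rightarrow> real \<times> (real^'n) \<Rightarrow> real^'n"
    and Yt :: "nat \<Rightarrow> nat \<Rightarrow> real \<times> (real^'n) \<Rightarrow> real \<times> (real^'n)"
  assumes "open \<Omega>" and "T > 0"
    and Y_maps: "\<forall>t\<ge>0. \<forall>\<xi>\<in>\<Omega>. Y t \<xi> \<in> \<Omega>"
    and Y_per: "\<forall>t\<ge>0. \<forall>\<xi>\<in>\<Omega>. Y (t + T) \<xi> = Y t \<xi>"
    and Y_smooth: "\<forall>t\<ge>0. smooth_on \<Omega> (Y t)"
    and G_smooth: "\<forall>n. smooth_on (UNIV \<times> \<Omega>) (G n)"
    and init0: "\<forall>t. \<forall>\<xi>\<in>\<Omega>. Yt 0 0 (t, \<xi>) = (1, 0)"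
    and init1: "\<forall>t. \<forall>\<xi>\<in>\<Omega>. Yt 0 1 (t, \<xi>) = (0, Y t \<xi>)"
    and init2: "\<forall>k\<ge>2. \<forall>t. \<forall>\<xi>\<in>\<Omega>. Yt 0 k (t, \<xi>) = 0"
    and recur: "\<forall>i n. \<forall>t. \<forall>\<xi>\<in>\<Omega>. Yt (Suc i) n (t, \<xi>) =
       Yt i (Suc n) (t, \<xi>) +
       (\<Sum>k\<le>n. real (n choose k) *\<^sub>R lie_deriv (gen_field G (n - k)) (Yt i k) (t, \<xi>))"
    and lie1: "\<forall>t. \<forall>\<xi>\<in>\<Omega>. Yt 1 0 (t, \<xi>) = (0, avg T Y \<xi>)"
    and lie2: "\<forall>m\<ge>2. \<forall>t. \<forall>\<xi>\<in>\<Omega>. Yt m 0 (t, \<xi>) = 0"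
  shows "\<forall>j\<ge>2. \<forall>l\<le>j - 2. \<forall>t. \<forall>\<xi>\<in>\<Omega>. Yt (j - l) l (t, \<xi>) = 0"
proof (intro allI impI ballI)
  fix j l :: nat and t :: real and \<xi>
  assume "j \<ge> 2" "l \<le> j - 2" "\<xi> \<in> \<Omega>"
  have "open (UNIV \<times> \<Omega>)"
    using \<open>open \<Omega>\<close> by (simp add: open_Times)
  moreover have "\<And>n x. x \<in> UNIV \<times> \<Omega> \<Longrightarrow> G n differentiable (at x)"
    using G_smooth smooth_on_differentiable by blast
  moreover have "\<And>i n x. x \<in> UNIV \<times> \<Omega> \<Longrightarrow> Yt (Suc i) n x = Yt i (Suc n) x +
      (\<Sum>k\<le>n. real (n choose k) *\<^sub>R lie_deriv (gen_field G (n - k)) (Yt i k) x)"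
    using recur by auto
  moreover have "\<And>m x. m \<ge> 2 \<Longrightarrow> x \<in> UNIV \<times> \<Omega> \<Longrightarrow> Yt m 0 x = 0"
    using lie2 by auto
  moreover have "j - l \<ge> 2" "(t, \<xi>) \<in> UNIV \<times> \<Omega>"
    using \<open>j \<ge> 2\<close> \<open>l \<le> j - 2\<close> \<open>\<xi> \<in> \<Omega>\<close> by auto
  ultimately show "Yt (j - l) l (t, \<xi>) = 0"
    by (rule lie_recursion_higher_fields_vanish)
qed

end
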